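(* Consider the strong recursive skeletonization procedure described in the context, applied to $K$, with arbitrary choices of the partitions $\mathcal{B}_m=\mathcal{R}_m\cup\mathcal{S}_m$ and interpolation matrices at each step (assuming the pivot blocks are invertible). Let $\ell\ge1$ and let $r$ be the number of the last box at level $\ell$, and let $A=Z(K;\mathcal{B}_1,\dots,\mathcal{B}_r)$. For every box $j>r$, let $\mathcal{B}_j$ be the set of DOFs active in $A$ whose points lie in box $j$, and $\mathcal{F}_j$ the set of DOFs active in $A$ that lie neither in box $j$ nor in any neighbor of box $j$ at the level of box $j$. Then $$A_{\mathcal{F}_j\mathcal{B}_j}=K_{\mathcal{F}_j\mathcal{B}_j}\quad\text{and}\quad A_{\mathcal{B}_j\mathcal{F}_j}=K_{\mathcal{B}_j\mathcal{F}_j}\qquad\text{for all } j>r.$$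
   Context: Let $K\in\mathbb{C}^{N\times N}$ have rows and columns indexed by $[N]=\{1,\dots,N\}$; each index (a "DOF") $i$ is associated with a point $x_i\in\mathbb{R}^d$, $d\in\{2,3\}$, in a cube $\Omega$. For index sets $\mathcal{I},\mathcal{J}$, $A_{\mathcal{I}\mathcal{J}}$ is the corresponding submatrix. A uniformly refined quadtree ($d=2$) or octree ($d=3$) decomposition of $\Omega$ is given, with levels numbered from the finest $\ell=1$ (leaves) to the root $\ell=L$; boxes at level $\ell$ have sidelength $D_\ell=2^{\ell-1}D_1$. Two distinct boxes at the same level are neighbors if they are adjacent. Boxes are numbered $1,2,\dots$ along a fixed bottom-up level-by-level traversal (every box of level $\ell$ precedes every box of level $\ell+1$). Procedure: maintain a matrix $A$ (initially $A=K$) and a set of active DOFs (initially all of $[N]$). Boxes are processed in order. When box $m$, at level $\ell$, is processed: $\mathcal{B}_m$ is the set of active DOFs whose points lie in box $m$ (for $\ell>1$ this is the union of the skeleton sets $\mathcal{S}_c$ of the children $c$ of box $m$); $\mathcal{N}_m$ is the set of active DOFs lying in the level-$\ell$ neighbors of box $m$; $\mathcal{F}_m$ is the set of remaining active DOFs (far field). A partition $\mathcal{B}_m=\mathcal{R}_m\cup\mathcal{S}_m$ (redundant/skeleton) and a matrix $T$ of size $|\mathcal{S}_m|\times|\mathcal{R}_m|$ are chosen (via an interpolative decomposition). Writing $R,S,N$ for $\mathcal{R}_m,\mathcal{S}_m,\mathcal{N}_m$, set $X_{RR}=A_{RR}-T^*A_{SR}-A_{RS}T+T^*A_{SS}T$,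 $X_{RS}=A_{RS}-T^*A_{SS}$, $X_{SR}=A_{SR}-A_{SS}T$, $X_{RN}=A_{RN}-T^*A_{SN}$, $X_{NR}=A_{NR}-A_{NS}T$, and, with $X_{RR}$ invertible, $X_{SS}=A_{SS}-X_{SR}X_{RR}^{-1}X_{RS}$, $X_{SN}=A_{SN}-X_{SR}X_{RR}^{-1}X_{RN}$, $X_{NS}=A_{NS}-X_{NR}X_{RR}^{-1}X_{RS}$, $X_{NN}=A_{NN}-X_{NR}X_{RR}^{-1}X_{RN}$. The strongly skeletonized matrix $Z(A;\mathcal{B}_m)$ equals $A$ except that its $(R,R)$ block is $X_{RR}$, all other entries in rows or columns indexed by $R$ are zero, and its $(S,S),(S,N),(N,S),(N,N)$ blocks are $X_{SS},X_{SN},X_{NS},X_{NN}$; all other entries are unchanged. Then $A$ is replaced by $Z(A;\mathcal{B}_m)$ and the DOFs of $\mathcal{R}_m$ become inactive. $Z(K;\mathcal{B}_1,\dots,\mathcal{B}_r)$ denotes the matrix obtained after processing boxes $1,\dots,r$ in order. *)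

theory Defs
  imports "HOL-Analysis.Analysis"
begin

text \<open>A matrix in C^(N x N) is represented by a function nat => nat => complex;
only the entries with indices in {1..N} are relevant. Blocks A_IJ are
restrictions to I x J.\<close>

type_synonym cmat = "nat \<Rightarrow> nat \<Rightarrow> complex"

definition is_inv_on :: "nat set \<Rightarrow> cmat \<Rightarrow> cmat \<Rightarrow> bool" where
  "is_inv_on R X Y \<longleftrightarrow>
     (\<forall>i\<in>R. \<forall>k\<in>R. (\<Sum>j\<in>R. X i j * Y j k) = (if i = k then 1 else 0)
                  \<and> (\<Sum>j\<in>R. Y i j * X j k) = (if i = k then 1 else 0))"

definition invertible_on :: "nat set \<Rightarrow> cmat \<Rightarrow> bool" where
  "invertible_on R X \<longleftrightarrow> (\<exists>Y. is_inv_on R X Y)"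

definition inv_on :: "nat set \<Rightarrow> cmat \<Rightarrow> cmat" where
  "inv_on R X = (SOME Y. is_inv_on R X Y)"

section \<open>Strong skeletonization Z(A; B) for a given partition B = R \<union> S,
  interpolation matrix T (entries T s r, s in S, r in R) and neighbor set N\<close>

text \<open>X_RR = A_RR - T^* A_SR - A_RS T + T^* A_SS T\<close>
definition skXRR :: "cmat \<Rightarrow> nat set \<Rightarrow> nat set \<Rightarrow> cmat \<Rightarrow> cmat" where
  "skXRR A R S T = (\<lambda>i k.
      A i k - (\<Sum>s\<in>S. cnj (T s i) * A s k) - (\<Sum>s\<in>S. A i s * T s k)
      + (\<Sum>s\<in>S. \<Sum>s'\<in>S. cnj (T s i) * A s s' * T s' k))"

text \<open>Rows indexed by R, columns c in S \<union> N: X_Rc = A_Rc - T^* A_Sc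
  (this gives X_RS and X_RN).\<close>
definition skXRrow :: "cmat \<Rightarrow> nat set \<Rightarrow> cmat \<Rightarrow> cmat" where
  "skXRrow A S T = (\<lambda>i c. A i c - (\<Sum>s\<in>S. cnj (T s i) * A s c))"

text \<open>Rows c in S \<union> N, columns indexed by R: X_cR = A_cR - A_cS T
  (this gives X_SR and X_NR).\<close>
definition skXRcol :: "cmat \<Rightarrow> nat set \<Rightarrow> cmat \<Rightarrow> cmat" where
  "skXRcol A S T = (\<lambda>c k. A c k - (\<Sum>s\<in>S. A c s * T s k))"

definition strong_skel :: "cmat \<Rightarrow> nat set \<Rightarrow> nat set \<Rightarrow> cmat \<Rightarrow> nat set \<Rightarrow> cmat" where
  "strong_skel A R S T Nb = (\<lambda>i k.
     if i \<in> R \<and> k \<in> R then skXRR A R S T i k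
     else if i \<in> R \<or> k \<in> R then 0
     else if i \<in> S \<union> Nb \<and> k \<in> S \<union> Nb then
       A i k - (\<Sum>p\<in>R. \<Sum>q\<in>R. skXRcol A S T i p * inv_on R (skXRR A R S T) p q
                                 * skXRrow A S T q k)
     else A i k)"

text \<open>Generic over the box type 'b, the membership predicate inb (inb bx i: DOF i
  lies in box bx), the neighbor relation nbr, and the processing order ord
  (box number m is ord ! (m - 1)). The choices at step m are Rs m, Ss m, Ts m.
  The state after processing boxes 1..m is (matrix, set of active DOFs).\<close>

fun skel_state :: "cmat \<Rightarrow> nat \<Rightarrow> ('b \<Rightarrow> nat \<Rightarrow> bool) \<Rightarrow> ('b \<Rightarrow> 'b \<Rightarrow> bool) \<Rightarrow> 'b list
      \<Rightarrow> (nat \<Rightarrow> nat set) \<Rightarrow> (nat \<Rightarrow> nat set) \<Rightarrow> (nat \<Rightarrow> cmat) \<Rightarrow> nat \<Rightarrow> cmat \<times> nat set" where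
  "skel_state K N inb nbr ord Rs Ss Ts 0 = (K, {1..N})"
| "skel_state K N inb nbr ord Rs Ss Ts (Suc m) =
     (let st = skel_state K N inb nbr ord Rs Ss Ts m;
          A = fst st; act = snd st; bx = ord ! m;
          Nb = {i \<in> act. \<exists>b'. nbr bx b' \<and> inb b' i}
      in (strong_skel A (Rs (Suc m)) (Ss (Suc m)) (Ts (Suc m)) Nb, act - Rs (Suc m)))"

text \<open>B_m: active DOFs (before processing box m) lying in box m.\<close>
definition skel_B :: "cmat \<Rightarrow> nat \<Rightarrow> ('b \<Rightarrow> nat \<Rightarrow> bool) \<Rightarrow> ('b \<Rightarrow> 'b \<Rightarrow> bool) \<Rightarrow> 'b list
      \<Rightarrow> (nat \<Rightarrow> nat set) \<Rightarrow> (nat \<Rightarrow> nat set) \<Rightarrow> (nat \<Rightarrow> cmat) \<Rightarrow> nat \<Rightarrow> nat set" where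
  "skel_B K N inb nbr ord Rs Ss Ts m =
     {i \<in> snd (skel_state K N inb nbr ord Rs Ss Ts (m - 1)). inb (ord ! (m - 1)) i}"

text \<open>The cube is Omega = a + [0, D_L]^d with D_L = 2^(L-1) D_1. Levels are 1 (leaves)
  to L (root). A box at level l is (l, b) with integer coordinates b k < 2^(L-l);
  it is the set a + prod_k [b_k D_l, (b_k+1) D_l). Boxes are taken half-open, except that
  points on the upper faces of Omega belong to the last box (a convention resolving
  ownership of boundary points). Each point lies in exactly one leaf.\<close>

definition cube :: "real^'d \<Rightarrow> real \<Rightarrow> nat \<Rightarrow> (real^'d) set" where
  "cube a D1 L = {y. \<forall>k. a $ k \<le> y $ k \<and> y $ k \<le> a $ k + 2 ^ (L - 1) * D1}"

definition leaf_index :: "real^'d \<Rightarrow> real \<Rightarrow> nat \<Rightarrow> real^'d \<Rightarrow> 'd \<Rightarrow> nat" where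
  "leaf_index a D1 L y = (\<lambda>k. min (2 ^ (L - 1) - 1) (nat \<lfloor>(y $ k - a $ k) / D1\<rfloor>))"

definition is_box :: "nat \<Rightarrow> nat \<times> ('d \<Rightarrow> nat) \<Rightarrow> bool" where
  "is_box L bx \<longleftrightarrow> 1 \<le> fst bx \<and> fst bx \<le> L \<and> (\<forall>k. snd bx k < 2 ^ (L - fst bx))"

definition in_box :: "real^'d \<Rightarrow> real \<Rightarrow> nat \<Rightarrow> (nat \<Rightarrow> real^'d) \<Rightarrow> nat \<times> ('d \<Rightarrow> nat) \<Rightarrow> nat \<Rightarrow> bool" where
  "in_box a D1 L x bx i \<longleftrightarrow>
     (\<forall>k. leaf_index a D1 L (x i) k div 2 ^ (fst bx - 1) = snd bx k)"

text \<open>Two distinct boxes of the same level are neighbors iff they are adjacent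
  (share at least a corner).\<close>
definition box_nbr :: "nat \<Rightarrow> nat \<times> ('d \<Rightarrow> nat) \<Rightarrow> nat \<times> ('d \<Rightarrow> nat) \<Rightarrow> bool" where
  "box_nbr L bx bx' \<longleftrightarrow> is_box L bx' \<and> fst bx' = fst bx \<and> snd bx' \<noteq> snd bx \<and>
     (\<forall>k. snd bx k \<le> snd bx' k + 1 \<and> snd bx' k \<le> snd bx k + 1)"

end

theory Submission
  imports Defs
begin

text \<open>A step of strong skeletonization only modifies entries in the rows and columns of its
  redundant DOFs, which become inactive, and entries between two DOFs lying in the processed
  box or its neighbours. If all boxes processed so far have level at most \<open>l\<close>, such two DOFs
  lie in the same or in adjacent boxes at every level above \<open>l\<close>. A DOF in a box \<open>j\<close> of level
  above \<open>l\<close> and a DOF outside the neighbourhood of that box are not in adjacent boxes at that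
  level, so the entry between them is never modified.\<close>

definition coord_adjacent :: "('d \<Rightarrow> nat) \<Rightarrow> ('d \<Rightarrow> nat) \<Rightarrow> bool" where
  "coord_adjacent s t \<longleftrightarrow> (\<forall>k. s k \<le> t k + 1 \<and> t k \<le> s k + 1)"

definition coarsen :: "('d \<Rightarrow> nat) \<Rightarrow> nat \<Rightarrow> 'd \<Rightarrow> nat" where
  "coarsen c e = (\<lambda>k. c k div 2 ^ e)"

definition in_nbhd :: "('b \<Rightarrow> nat \<Rightarrow> bool) \<Rightarrow> ('b \<Rightarrow> 'b \<Rightarrow> bool) \<Rightarrow> 'b \<Rightarrow> nat \<Rightarrow> bool" where
  "in_nbhd inb nbr b i \<longleftrightarrow> inb b i \<or> (\<exists>b'. nbr b b' \<and> inb b' i)"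

lemma coord_adjacent_sym: "coord_adjacent s t \<longleftrightarrow> coord_adjacent t s"
  by (auto simp: coord_adjacent_def)

lemma div_pow2_le_Suc_if_le_add_2:
  fixes u v :: nat
  assumes "u div 2 ^ a \<le> v div 2 ^ a + 2" and "a < b"
  shows "u div 2 ^ b \<le> v div 2 ^ b + 1"
proof -
  define m :: nat where "m = 2 ^ (b - a)"
  have m2: "2 \<le> m"
    using assms(2) power_increasing[of 1 "b - a" "2::nat"] by (simp add: m_def)
  have "(2::nat) ^ b = 2 ^ a * m"
    using assms(2) by (simp add: m_def flip: power_add)
  then have split: "w div 2 ^ b = w div 2 ^ a div m" for w :: nat
    by (simp add: div_mult2_eq)
  have "u div 2 ^ a div m \<le> (v div 2 ^ a + m) div m"
    using assms(1) m2 by (intro div_le_mono) linarith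
  also have "\<dots> = v div 2 ^ a div m + 1"
    using m2 by simp
  finally show ?thesis
    by (simp add: split)
qed

lemma coord_adjacent_coarsen_mono:
  assumes "coord_adjacent (coarsen u a) s" and "coord_adjacent (coarsen v a) s" and "a < b"
  shows "coord_adjacent (coarsen u b) (coarsen v b)"
  unfolding coord_adjacent_def coarsen_def
proof
  fix k
  have "u k div 2 ^ a \<le> s k + 1" "s k \<le> u k div 2 ^ a + 1"
       "v k div 2 ^ a \<le> s k + 1" "s k \<le> v k div 2 ^ a + 1"
    using assms(1,2) by (simp_all add: coord_adjacent_def coarsen_def)
  then have "u k div 2 ^ a \<le> v k div 2 ^ a + 2" "v k div 2 ^ a \<le> u k div 2 ^ a + 2"
    by linarith+
  then show "u k div 2 ^ b \<le> v k div 2 ^ b + 1 \<and> v k div 2 ^ b \<le> u k div 2 ^ b + 1"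
    using div_pow2_le_Suc_if_le_add_2[OF _ assms(3)] by blast
qed

lemma strong_skel_eq_outside:
  assumes "i \<notin> R" and "k \<notin> R" and "\<not> (i \<in> S \<union> Nb \<and> k \<in> S \<union> Nb)"
  shows "strong_skel A R S T Nb i k = A i k"
  using assms unfolding strong_skel_def by (simp del: Un_iff) blast

lemma skel_state_entries_unchanged:
  assumes skel_in_box: "\<forall>m<n. Ss (Suc m) \<subseteq> Collect (inb (ord ! m))"
    and nbhd_close: "\<forall>m<n. \<forall>i k. in_nbhd inb nbr (ord ! m) i \<longrightarrow> in_nbhd inb nbr (ord ! m) k
                                \<longrightarrow> close i k"
    and "p \<in> snd (skel_state K N inb nbr ord Rs Ss Ts n)"
    and "q \<in> snd (skel_state K N inb nbr ord Rs Ss Ts n)"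
    and "\<not> close p q"
  shows "fst (skel_state K N inb nbr ord Rs Ss Ts n) p q = K p q"
  using assms
proof (induction n arbitrary: p q)
  case 0
  then show ?case by simp
next
  case (Suc m)
  define st where "st = skel_state K N inb nbr ord Rs Ss Ts m"
  define Nb where "Nb = {i \<in> snd st. \<exists>b'. nbr (ord ! m) b' \<and> inb b' i}"
  have step: "skel_state K N inb nbr ord Rs Ss Ts (Suc m) =
      (strong_skel (fst st) (Rs (Suc m)) (Ss (Suc m)) (Ts (Suc m)) Nb, snd st - Rs (Suc m))"
    by (simp add: st_def Nb_def Let_def)
  have "i \<in> Ss (Suc m) \<union> Nb \<Longrightarrow> in_nbhd inb nbr (ord ! m) i" for i
    using Suc.prems(1) by (auto simp: Nb_def in_nbhd_def)
  with Suc.prems(2,5) have "\<not> (p \<in> Ss (Suc m) \<union> Nb \<and> q \<in> Ss (Suc m) \<union> Nb)"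
    by blast
  moreover have "p \<in> snd st" "q \<in> snd st" "p \<notin> Rs (Suc m)" "q \<notin> Rs (Suc m)"
    using Suc.prems(3,4) unfolding step by simp_all
  moreover have "fst st p q = K p q"
    unfolding st_def
    by (rule Suc.IH) (use Suc.prems(1,2,5) calculation(2,3) in \<open>auto simp: st_def less_Suc_eq\<close>)
  ultimately show ?case
    unfolding step by (simp add: strong_skel_eq_outside)
qed

lemma leaf_index_less: "leaf_index a D1 L y k < 2 ^ (L - 1)"
  unfolding leaf_index_def by (rule le_less_trans[OF min.cobounded1]) simp

lemma in_box_iff_coarsen: "in_box a D1 L x bx i \<longleftrightarrow> coarsen (leaf_index a D1 L (x i)) (fst bx - 1) = snd bx"
  by (simp add: in_box_def coarsen_def fun_eq_iff)

lemma in_nbhd_iff_coord_adjacent: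
  assumes "is_box L bx"
  shows "in_nbhd (in_box a D1 L x) (box_nbr L) bx i \<longleftrightarrow>
         coord_adjacent (coarsen (leaf_index a D1 L (x i)) (fst bx - 1)) (snd bx)"
    (is "_ \<longleftrightarrow> coord_adjacent ?c _")
proof
  assume "in_nbhd (in_box a D1 L x) (box_nbr L) bx i"
  then show "coord_adjacent ?c (snd bx)"
    by (auto simp: in_nbhd_def in_box_iff_coarsen box_nbr_def coord_adjacent_def)
next
  assume adj: "coord_adjacent ?c (snd bx)"
  show "in_nbhd (in_box a D1 L x) (box_nbr L) bx i"
  proof (cases "?c = snd bx")
    case True
    then show ?thesis by (simp add: in_nbhd_def in_box_iff_coarsen)
  next
    case False
    have "(2::nat) ^ (L - 1) = 2 ^ (L - fst bx) * 2 ^ (fst bx - 1)"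
      using assms by (simp add: is_box_def flip: power_add)
    then have "leaf_index a D1 L (x i) k < 2 ^ (L - fst bx) * 2 ^ (fst bx - 1)" for k
      using leaf_index_less[of a D1 L "x i" k] by simp
    then have "?c k < 2 ^ (L - fst bx)" for k
      unfolding coarsen_def by (rule less_mult_imp_div_less)
    then have "box_nbr L bx (fst bx, ?c)"
      using assms adj False by (auto simp: box_nbr_def is_box_def coord_adjacent_def)
    then show ?thesis
      by (force simp: in_nbhd_def in_box_iff_coarsen)
  qed
qed

lemma in_nbhd_close_above_level:
  assumes "in_nbhd (in_box a D1 L x) (box_nbr L) b i"
    and "in_nbhd (in_box a D1 L x) (box_nbr L) b k"
    and "fst b < lev" and "1 \<le> fst b"
  shows "coord_adjacent (coarsen (leaf_index a D1 L (x i)) (lev - 1))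
                        (coarsen (leaf_index a D1 L (x k)) (lev - 1))"
proof -
  have "coord_adjacent (coarsen (leaf_index a D1 L (x j)) (fst b - 1)) (snd b)"
    if "in_nbhd (in_box a D1 L x) (box_nbr L) b j" for j
    using that by (auto simp: in_nbhd_def in_box_iff_coarsen box_nbr_def coord_adjacent_def)
  with assms show ?thesis
    by (intro coord_adjacent_coarsen_mono[where s = "snd b" and a = "fst b - 1"]) auto
qed

lemma sorted_level_less_after_last:
  assumes "sorted (map fst ord)" and "1 \<le> r" and "r \<le> length ord"
    and "r = length ord \<or> fst (ord ! r) \<noteq> fst (ord ! (r - 1))"
    and "m < r" and "r \<le> m'" and "m' < length ord"
  shows "fst (ord ! m) < fst (ord ! m')"
proof -
  have mono: "i \<le> j \<Longrightarrow> j < length ord \<Longrightarrow> fst (ord ! i) \<le> fst (ord ! j)" for i j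
    using sorted_nth_mono[OF assms(1)] by fastforce
  have "fst (ord ! m) \<le> fst (ord ! (r - 1))"
    using mono[of m "r - 1"] assms(3,5) by simp
  also have "\<dots> < fst (ord ! r)"
    using mono[of "r - 1" r] assms(2,4,6,7) by (simp add: order_less_le)
  also have "\<dots> \<le> fst (ord ! m')"
    using mono[of r m'] assms(6,7) by simp
  finally show ?thesis .
qed

lemma skel_choices_skeleton_in_box:
  assumes "\<forall>m\<in>{1..r}. Rs m \<union> Ss m = skel_B K N inb nbr ord Rs Ss Ts m"
  shows "\<forall>m<r. Ss (Suc m) \<subseteq> Collect (inb (ord ! m))"
proof (intro allI impI)
  fix m assume "m < r"
  then have "Rs (Suc m) \<union> Ss (Suc m) = skel_B K N inb nbr ord Rs Ss Ts (Suc m)"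
    using assms by simp
  then show "Ss (Suc m) \<subseteq> Collect (inb (ord ! m))"
    by (auto simp: skel_B_def)
qed

lemma skel_state_entries_unchanged_near_higher_box:
  assumes boxes: "\<forall>m<n. is_box L (ord ! m)" and "is_box L bx"
    and skel_in_box: "\<forall>m<n. Ss (Suc m) \<subseteq> Collect (in_box a D1 L x (ord ! m))"
    and below: "\<forall>m<n. fst (ord ! m) < fst bx"
    and p: "p \<in> snd (skel_state K N (in_box a D1 L x) (box_nbr L) ord Rs Ss Ts n)"
           "\<not> in_nbhd (in_box a D1 L x) (box_nbr L) bx p"
    and q: "q \<in> snd (skel_state K N (in_box a D1 L x) (box_nbr L) ord Rs Ss Ts n)"
           "in_box a D1 L x bx q"
  shows "fst (skel_state K N (in_box a D1 L x) (box_nbr L) ord Rs Ss Ts n) p q = K p q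
       \<and> fst (skel_state K N (in_box a D1 L x) (box_nbr L) ord Rs Ss Ts n) q p = K q p"
proof -
  define close where "close i k \<longleftrightarrow> coord_adjacent (coarsen (leaf_index a D1 L (x i)) (fst bx - 1))
                                                (coarsen (leaf_index a D1 L (x k)) (fst bx - 1))" for i k
  have nbhd_close: "\<forall>m<n. \<forall>i k. in_nbhd (in_box a D1 L x) (box_nbr L) (ord ! m) i
                      \<longrightarrow> in_nbhd (in_box a D1 L x) (box_nbr L) (ord ! m) k \<longrightarrow> close i k"
    unfolding close_def using boxes below
    by (intro allI impI in_nbhd_close_above_level) (auto simp: is_box_def)
  have q_coarse: "coarsen (leaf_index a D1 L (x q)) (fst bx - 1) = snd bx"
    using q(2) by (simp add: in_box_iff_coarsen)
  have "\<not> coord_adjacent (coarsen (leaf_index a D1 L (x p)) (fst bx - 1)) (snd bx)"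
    using p(2) in_nbhd_iff_coord_adjacent[OF assms(2)] by simp
  then have "\<not> close p q" "\<not> close q p"
    unfolding close_def q_coarse by (simp_all add: coord_adjacent_sym)
  then show ?thesis
    using skel_state_entries_unchanged[OF skel_in_box nbhd_close] p(1) q(1) by simp
qed

theorem corollary3p2:
  fixes K :: "nat \<Rightarrow> nat \<Rightarrow> complex" and N :: nat
    and x :: "nat \<Rightarrow> real^'d::finite" and a :: "real^'d" and D1 :: real and L :: nat
    and ord :: "(nat \<times> ('d \<Rightarrow> nat)) list"
    and Rs Ss :: "nat \<Rightarrow> nat set" and Ts :: "nat \<Rightarrow> nat \<Rightarrow> nat \<Rightarrow> complex"
    and l r :: nat
  assumes dim: "CARD('d) = 2 \<or> CARD('d) = 3"
    and D1pos: "D1 > 0" and L1: "L \<ge> 1"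
    and pts: "\<forall>i\<in>{1..N}. x i \<in> cube a D1 L"
    and ord_distinct: "distinct ord"
    and ord_set: "set ord = {bx. is_box L bx}"
    and ord_levels: "sorted (map fst ord)"
    and choices: "\<forall>m\<in>{1..r}.
        Rs m \<union> Ss m = skel_B K N (in_box a D1 L x) (box_nbr L) ord Rs Ss Ts m
        \<and> Rs m \<inter> Ss m = {}
        \<and> invertible_on (Rs m)
             (skXRR (fst (skel_state K N (in_box a D1 L x) (box_nbr L) ord Rs Ss Ts (m - 1)))
                    (Rs m) (Ss m) (Ts m))"
    and l1: "l \<ge> 1"
    and r_last: "1 \<le> r \<and> r \<le> length ord \<and> fst (ord ! (r - 1)) = l
                 \<and> (r = length ord \<or> fst (ord ! r) \<noteq> l)"
  shows "let A = fst (skel_state K N (in_box a D1 L x) (box_nbr L) ord Rs Ss Ts r);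
             act = snd (skel_state K N (in_box a D1 L x) (box_nbr L) ord Rs Ss Ts r)
         in \<forall>j. r < j \<and> j \<le> length ord \<longrightarrow>
              (let bx = ord ! (j - 1);
                   Bj = {i \<in> act. in_box a D1 L x bx i};
                   Fj = {i \<in> act. \<not> in_box a D1 L x bx i
                                  \<and> \<not> (\<exists>bx'. box_nbr L bx bx' \<and> in_box a D1 L x bx' i)}
               in \<forall>p\<in>Fj. \<forall>q\<in>Bj. A p q = K p q \<and> A q p = K q p)"
proof -
  let ?inb = "in_box a D1 L x"
  have boxes: "is_box L (ord ! m)" if "m < length ord" for m
    using that ord_set nth_mem by blast
  have skel_in_box: "\<forall>m<r. Ss (Suc m) \<subseteq> Collect (?inb (ord ! m))"
    by (rule skel_choices_skeleton_in_box[of r Rs Ss K N ?inb "box_nbr L" ord Ts]) (use choices in blast)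
  show ?thesis
    unfolding Let_def
  proof (intro allI impI ballI)
    fix j p q
    assume j: "r < j \<and> j \<le> length ord"
      and p: "p \<in> {i \<in> snd (skel_state K N ?inb (box_nbr L) ord Rs Ss Ts r).
                 \<not> ?inb (ord ! (j - 1)) i \<and> \<not> (\<exists>bx'. box_nbr L (ord ! (j - 1)) bx' \<and> ?inb bx' i)}"
      and q: "q \<in> {i \<in> snd (skel_state K N ?inb (box_nbr L) ord Rs Ss Ts r). ?inb (ord ! (j - 1)) i}"
    have boxes_r: "\<forall>m<r. is_box L (ord ! m)" and box_j: "is_box L (ord ! (j - 1))"
      using boxes j r_last by (simp, intro boxes) linarith
    have below: "\<forall>m<r. fst (ord ! m) < fst (ord ! (j - 1))"
      using sorted_level_less_after_last[OF ord_levels, of r _ "j - 1"] r_last j by auto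
    have p_far: "p \<in> snd (skel_state K N ?inb (box_nbr L) ord Rs Ss Ts r)"
        "\<not> in_nbhd ?inb (box_nbr L) (ord ! (j - 1)) p"
      using p by (simp_all add: in_nbhd_def)
    have q_in: "q \<in> snd (skel_state K N ?inb (box_nbr L) ord Rs Ss Ts r)" "?inb (ord ! (j - 1)) q"
      using q by simp_all
    show "fst (skel_state K N ?inb (box_nbr L) ord Rs Ss Ts r) p q = K p q
        \<and> fst (skel_state K N ?inb (box_nbr L) ord Rs Ss Ts r) q p = K q p"
      by (rule skel_state_entries_unchanged_near_higher_box[OF boxes_r box_j skel_in_box below p_far q_in])
  qed
qed

end
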